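(* $\mathbb{T}$ satisfies Axiom A, witnessed by the orderings $q\leq_n p$ iff $q\leq p$ and the sets of splitting levels $A_q$ and $A_p$ coincide on their first $n+1$ elements.
   Context: $\mathbb{T}$ is the tree-forcing (ordered by inclusion) consisting of perfect trees $p\subseteq 3^{<\omega}$ together with a set $A_p\subseteq\omega$ (the splitting levels of $p$) such that: for every $t\in p$, $|t|\in A_p$ iff $t$ is a splitting node of $p$; every splitting node $t$ is fully splitting (i.e. $t^\frown i\in p$ for every $i\in 3$); for every $s\supseteq \mathrm{stem}(p)$ which is not splitting, $s^\frown 2\notin p$; and for all non-splitting $s,t\in p$ with $|s|=|t|$ and all $i\in 2$, $s^\frown i\in p\Leftrightarrow t^\frown i\in p$. Here $s^\frown i$ denotes the sequence $s$ extended by the value $i$, and $\mathrm{stem}(p)$ is the longest node of $p$ comparable with every node of $p$. *)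

theory Defs
  imports Main "HOL-Library.Sublist" "HOL-Library.Infinite_Set" "HOL-Library.Countable_Set"
begin

definition compatible :: "'a set \<Rightarrow> ('a \<Rightarrow> 'a \<Rightarrow> bool) \<Rightarrow> 'a \<Rightarrow> 'a \<Rightarrow> bool" where
  "compatible P le p q \<longleftrightarrow> (\<exists>r\<in>P. le r p \<and> le r q)"

definition antichain :: "'a set \<Rightarrow> ('a \<Rightarrow> 'a \<Rightarrow> bool) \<Rightarrow> 'a set \<Rightarrow> bool" where
  "antichain P le A \<longleftrightarrow> A \<subseteq> P \<and> (\<forall>a\<in>A. \<forall>b\<in>A. a \<noteq> b \<longrightarrow> \<not> compatible P le a b)"

definition axiomA :: "'a set \<Rightarrow> ('a \<Rightarrow> 'a \<Rightarrow> bool) \<Rightarrow> (nat \<Rightarrow> 'a \<Rightarrow> 'a \<Rightarrow> bool) \<Rightarrow> bool" where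
  "axiomA P le len \<longleftrightarrow>
     (\<forall>p\<in>P. le p p) \<and>
     (\<forall>p\<in>P. \<forall>q\<in>P. \<forall>r\<in>P. le r q \<longrightarrow> le q p \<longrightarrow> le r p) \<and>
     (\<forall>n. \<forall>p\<in>P. len n p p) \<and>
     (\<forall>n. \<forall>p\<in>P. \<forall>q\<in>P. \<forall>r\<in>P. len n r q \<longrightarrow> len n q p \<longrightarrow> len n r p) \<and>
     (\<forall>p\<in>P. \<forall>q\<in>P. len 0 q p \<longrightarrow> le q p) \<and>
     (\<forall>n. \<forall>p\<in>P. \<forall>q\<in>P. len (Suc n) q p \<longrightarrow> len n q p) \<and>
     (\<forall>ps :: nat \<Rightarrow> 'a. (\<forall>n. ps n \<in> P) \<longrightarrow> (\<forall>n. len n (ps (Suc n)) (ps n)) \<longrightarrow>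
        (\<exists>q\<in>P. \<forall>n. len n q (ps n))) \<and>
     (\<forall>A. antichain P le A \<longrightarrow> (\<forall>p\<in>P. \<forall>n. \<exists>q\<in>P. len n q p \<and>
        countable {a\<in>A. compatible P le q a}))"

text \<open>Nodes of 3^{<omega} are lists of naturals with entries < 3.\<close>

definition is_tree :: "nat list set \<Rightarrow> bool" where
  "is_tree p \<longleftrightarrow> p \<noteq> {} \<and> (\<forall>t\<in>p. set t \<subseteq> {0,1,2}) \<and>
     (\<forall>t\<in>p. \<forall>s. prefix s t \<longrightarrow> s \<in> p)"

definition splitting :: "nat list set \<Rightarrow> nat list \<Rightarrow> bool" where
  "splitting p t \<longleftrightarrow> t \<in> p \<and> (\<exists>i j. i \<noteq> j \<and> t @ [i] \<in> p \<and> t @ [j] \<in> p)"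

definition perfect_tree :: "nat list set \<Rightarrow> bool" where
  "perfect_tree p \<longleftrightarrow> is_tree p \<and> (\<forall>s\<in>p. \<exists>t. prefix s t \<and> splitting p t)"

definition stem :: "nat list set \<Rightarrow> nat list" where
  "stem p = (THE s. s \<in> p \<and> (\<forall>t\<in>p. prefix s t \<or> prefix t s) \<and>
       (\<forall>s'\<in>p. (\<forall>t\<in>p. prefix s' t \<or> prefix t s') \<longrightarrow> length s' \<le> length s))"

definition T_cond :: "nat list set \<Rightarrow> nat set \<Rightarrow> bool" where
  "T_cond p A \<longleftrightarrow> perfect_tree p \<and>
     (\<forall>t\<in>p. length t \<in> A \<longleftrightarrow> splitting p t) \<and>
     (\<forall>t. splitting p t \<longrightarrow> (\<forall>i<3. t @ [i] \<in> p)) \<and>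
     (\<forall>s\<in>p. prefix (stem p) s \<longrightarrow> \<not> splitting p s \<longrightarrow> s @ [2] \<notin> p) \<and>
     (\<forall>s\<in>p. \<forall>t\<in>p. \<not> splitting p s \<longrightarrow> \<not> splitting p t \<longrightarrow> length s = length t \<longrightarrow>
        (\<forall>i<2. s @ [i] \<in> p \<longleftrightarrow> t @ [i] \<in> p))"

definition TT :: "(nat list set \<times> nat set) set" where
  "TT = {(p, A). T_cond p A}"

definition TT_le :: "(nat list set \<times> nat set) \<Rightarrow> (nat list set \<times> nat set) \<Rightarrow> bool" where
  "TT_le q p \<longleftrightarrow> fst q \<subseteq> fst p"

definition TT_len :: "nat \<Rightarrow> (nat list set \<times> nat set) \<Rightarrow> (nat list set \<times> nat set) \<Rightarrow> bool" where
  "TT_len n q p \<longleftrightarrow> TT_le q p \<and> (\<forall>i\<le>n. enumerate (snd q) i = enumerate (snd p) i)"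

end

theory Submission
  imports Defs
begin

text \<open>
  A condition \<open>(p, A)\<close> of \<open>\<bbbT>\<close> is determined by the digits admitted at each level: all of
  \<open>{0, 1, 2}\<close> on the splitting levels \<open>A\<close> and a single digit elsewhere, which is \<open>0\<close> or \<open>1\<close>
  above the stem. So the conditions are exactly the trees of words whose \<open>k\<close>-th letter lies in
  \<open>D k\<close> for such a pattern \<open>D\<close>, and inclusion of trees is inclusion of patterns.

  Along a fusion sequence the first \<open>n + 1\<close> splitting levels are frozen from stage \<open>n\<close> on,
  so level \<open>k\<close> is settled from stage \<open>k\<close> on and the diagonal pattern is the fusion.

  For an antichain, stage \<open>j\<close> runs through the finitely many words of a length \<open>L\<close> beyond the
  \<open>(n + j)\<close>-th splitting level and shrinks the condition above \<open>L\<close> so that, whenever possible,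
  its cone above the word lies inside one member of the antichain. If a member \<open>a\<close> is compatible
  with the fusion \<open>q\<close>, grafting a common extension of \<open>q\<close> and \<open>a\<close> above level \<open>L\<close> shows
  that this was possible at some stage, so the cone of \<open>q\<close> above some node lies inside \<open>a\<close>.
  Distinct members get distinct nodes, and there are only countably many nodes.
\<close>

section \<open>Enumeration of infinite sets of naturals\<close>

lemma enumerate_agree_imp_mem_iff:
  fixes S S' :: "nat set"
  assumes inf: "infinite S" "infinite S'"
    and agree: "\<forall>j\<le>i. enumerate S j = enumerate S' j" and y: "y \<le> enumerate S i"
  shows "y \<in> S \<longleftrightarrow> y \<in> S'"
proof -
  have transfer: "y \<in> T'"
    if inf: "infinite T" "infinite T'" and agree: "\<forall>j\<le>i. enumerate T j = enumerate T' j"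
    and y: "y \<le> enumerate T i" and yT: "y \<in> T" for T T' :: "nat set"
  proof -
    obtain j where j: "enumerate T j = y" using enumerate_Ex[OF inf(1) yT] by blast
    then have "enumerate T j \<le> enumerate T i" using y by simp
    then have "j \<le> i" using inf(1) by simp
    then show ?thesis using agree j enumerate_in_set[OF inf(2)] by metis
  qed
  have "\<forall>j\<le>i. enumerate S' j = enumerate S j" "y \<le> enumerate S' i" using agree y by simp_all
  then show ?thesis using transfer[OF inf agree y] transfer[OF inf(2,1)] by blast
qed

lemma enumerate_eq_if_agree_below:
  fixes S S' :: "nat set"
  assumes inf: "infinite S" "infinite S'" and agree: "S \<inter> {..<L} = S' \<inter> {..<L}"
    and lt: "enumerate S j < L"
  shows "enumerate S' j = enumerate S j"
  using lt
proof (induction j)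
  case 0
  have "(LEAST k. k \<in> S') = enumerate S 0"
  proof (rule Least_equality)
    show "enumerate S 0 \<in> S'"
      using 0 agree enumerate_in_set[OF inf(1), of 0] by blast
    show "enumerate S 0 \<le> y" if "y \<in> S'" for y
    proof (cases "y < L")
      case True
      then have "y \<in> S" using that agree by blast
      then show ?thesis by (simp add: enumerate_0 Least_le)
    qed (use 0 in simp)
  qed
  then show ?case by (simp add: enumerate_0)
next
  case (Suc j)
  have ih: "enumerate S' j = enumerate S j"
    using Suc enumerate_step[OF inf(1), of j] by simp
  have "(LEAST k. k \<in> S' \<and> enumerate S j < k) = enumerate S (Suc j)"
  proof (rule Least_equality)
    show "enumerate S (Suc j) \<in> S' \<and> enumerate S j < enumerate S (Suc j)"
      using Suc.prems agree enumerate_in_set[OF inf(1)] enumerate_step[OF inf(1)] by blast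
    show "enumerate S (Suc j) \<le> y" if y: "y \<in> S' \<and> enumerate S j < y" for y
    proof (cases "y < L")
      case True
      then have "y \<in> S" using y agree by blast
      then show ?thesis using y by (simp add: enumerate_Suc''[OF inf(1)] Least_le)
    qed (use Suc.prems in simp)
  qed
  then show ?case using enumerate_Suc''[OF inf(2)] ih by simp
qed

lemma enumerate_range_strict_mono:
  fixes c :: "nat \<Rightarrow> nat"
  assumes mono: "strict_mono c"
  shows "enumerate (range c) = c"
proof
  fix i
  have inf: "infinite (range c)"
    using mono strict_mono_imp_inj_on range_inj_infinite by blast
  show "enumerate (range c) i = c i"
  proof (induction i)
    case 0
    show ?case
      unfolding enumerate_0 by (rule Least_equality) (auto simp: strict_mono_less_eq[OF mono])
  next
    case (Suc i)
    have "(LEAST s. s \<in> range c \<and> c i < s) = c (Suc i)"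
      by (rule Least_equality)
        (auto simp: strict_mono_less[OF mono] strict_mono_less_eq[OF mono] Suc_le_eq)
    then show ?case using Suc enumerate_Suc''[OF inf] by simp
  qed
qed

section \<open>Stems of trees\<close>

lemma prefix_nth: "prefix u w \<Longrightarrow> k < length u \<Longrightarrow> w ! k = u ! k"
  by (auto simp: prefix_def nth_append)

lemma comparable_if_take_min_eq:
  assumes "take (min (length u) (length w)) u = take (min (length u) (length w)) w"
  shows "prefix u w \<or> prefix w u"
proof (cases "length u \<le> length w")
  case True
  then have "u = take (length u) w" using assms by (simp add: min_def)
  then show ?thesis by (metis take_is_prefix)
next
  case False
  then have "take (length w) u = w" using assms by (simp add: min_def)
  then show ?thesis by (metis take_is_prefix)
qed

lemma comparable_if_no_split_below:
  assumes closed: "\<And>t u. t \<in> p \<Longrightarrow> prefix u t \<Longrightarrow> u \<in> p" and s: "s \<in> p"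
    and no_split: "\<And>t. t \<in> p \<Longrightarrow> length t < length s \<Longrightarrow> \<not> splitting p t"
    and t: "t \<in> p"
  shows "prefix s t \<or> prefix t s"
proof -
  have unique: "t1 = t2" if "t1 \<in> p" "t2 \<in> p" "length t1 = k" "length t2 = k" "k \<le> length s"
    for k t1 t2
    using that
  proof (induction k arbitrary: t1 t2)
    case 0
    then show ?case by simp
  next
    case (Suc k)
    obtain u1 x1 u2 x2 where t12: "t1 = u1 @ [x1]" "t2 = u2 @ [x2]"
      using Suc.prems(3,4) by (metis length_Suc_conv_rev)
    then have "u1 \<in> p" "u2 \<in> p" "length u1 = k" "length u2 = k"
      using Suc.prems closed by auto
    then have "u1 = u2" using Suc by simp
    moreover have "\<not> splitting p u1"
      using no_split \<open>u1 \<in> p\<close> \<open>length u1 = k\<close> Suc.prems(5) by simp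
    ultimately show ?case using Suc.prems t12 \<open>u1 \<in> p\<close> unfolding splitting_def by blast
  qed
  define m where "m = min (length s) (length t)"
  have "take m t \<in> p" "take m s \<in> p"
    using closed take_is_prefix t s by blast+
  then have "take m s = take m t"
    using unique[of "take m t" "take m s" m] by (simp add: m_def)
  then show ?thesis unfolding m_def by (rule comparable_if_take_min_eq)
qed

lemma prefix_if_comparable_shorter:
  "prefix u w \<or> prefix w u \<Longrightarrow> length u \<le> length w \<Longrightarrow> prefix u w"
  by (metis prefix_length_prefix prefix_order.refl)

lemma stem_eq_first_splitting:
  assumes closed: "\<And>t u. t \<in> p \<Longrightarrow> prefix u t \<Longrightarrow> u \<in> p"
    and s: "s \<in> p" "splitting p s"
    and no_split: "\<And>t. t \<in> p \<Longrightarrow> length t < length s \<Longrightarrow> \<not> splitting p t"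
  shows "stem p = s"
proof -
  let ?comparable = "\<lambda>s. \<forall>t\<in>p. prefix s t \<or> prefix t s"
  have comparable: "?comparable s"
    by (intro ballI comparable_if_no_split_below[of p]) (use closed s(1) no_split in blast)+
  obtain i j where ij: "i \<noteq> j" "s @ [i] \<in> p" "s @ [j] \<in> p"
    using s(2) unfolding splitting_def by blast
  have longest: "length s' \<le> length s" if "s' \<in> p" "?comparable s'" for s'
  proof (rule ccontr)
    assume "\<not> length s' \<le> length s"
    then have "prefix (s @ [x]) s'" if "s @ [x] \<in> p" for x
      using \<open>?comparable s'\<close> that by (intro prefix_if_comparable_shorter) auto
    then have "prefix (s @ [i]) (s @ [j]) \<or> prefix (s @ [j]) (s @ [i])"
      using ij prefix_same_cases by blast
    then show False using ij(1) by simp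
  qed
  show ?thesis
    unfolding stem_def
  proof (rule the_equality)
    show "s \<in> p \<and> ?comparable s \<and> (\<forall>s'\<in>p. ?comparable s' \<longrightarrow> length s' \<le> length s)"
      using s comparable longest by blast
    show "s' = s" if "s' \<in> p \<and> ?comparable s' \<and> (\<forall>t\<in>p. ?comparable t \<longrightarrow> length t \<le> length s')"
      for s'
      using that s(1) comparable longest prefix_if_comparable_shorter
      by (metis prefix_order.antisym)
  qed
qed

section \<open>Conditions of \<open>\<bbbT>\<close> as digit trees\<close>

definition digit_tree :: "(nat \<Rightarrow> nat set) \<Rightarrow> nat list set" where
  "digit_tree D = {w. \<forall>k<length w. w ! k \<in> D k}"

lemma digit_tree_Nil [simp]: "[] \<in> digit_tree D"
  by (simp add: digit_tree_def)

lemma digit_tree_snoc [simp]: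
  "w @ [x] \<in> digit_tree D \<longleftrightarrow> w \<in> digit_tree D \<and> x \<in> D (length w)"
  unfolding digit_tree_def by (auto simp: nth_append less_Suc_eq)

lemma digit_tree_prefix: "w \<in> digit_tree D \<Longrightarrow> prefix u w \<Longrightarrow> u \<in> digit_tree D"
  unfolding digit_tree_def prefix_def by (auto simp: nth_append) (metis trans_less_add1)

lemma digit_tree_extend:
  assumes "\<And>k. D k \<noteq> {}" and "w \<in> digit_tree D" and "length w \<le> m"
  obtains w' where "prefix w w'" "length w' = m" "w' \<in> digit_tree D"
proof -
  have "\<forall>k. \<exists>x. x \<in> D k" using assms(1) by blast
  then obtain f where f: "\<And>k. f k \<in> D k" by metis
  let ?w' = "w @ map f [length w..<m]"
  have "?w' \<in> digit_tree D"
    using assms(2) f unfolding digit_tree_def by (auto simp: nth_append)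
  then show ?thesis using assms(3) by (intro that[of ?w']) simp_all
qed

lemma digit_tree_mono: "(\<And>k. D' k \<subseteq> D k) \<Longrightarrow> digit_tree D' \<subseteq> digit_tree D"
  unfolding digit_tree_def by blast

lemma digit_tree_subset_iff:
  assumes "\<And>k. D' k \<noteq> {}"
  shows "digit_tree D' \<subseteq> digit_tree D \<longleftrightarrow> (\<forall>k. D' k \<subseteq> D k)"
proof
  assume sub: "digit_tree D' \<subseteq> digit_tree D"
  show "\<forall>k. D' k \<subseteq> D k"
  proof (intro allI subsetI)
    fix k x assume "x \<in> D' k"
    obtain w where w: "length w = k" "w \<in> digit_tree D'"
      by (rule digit_tree_extend[OF assms digit_tree_Nil, of k]) simp_all
    then have "w @ [x] \<in> digit_tree D'" using \<open>x \<in> D' k\<close> by simp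
    then have "w @ [x] \<in> digit_tree D" using sub by blast
    then show "x \<in> D k" using w by simp
  qed
qed (simp add: digit_tree_mono)

lemma digit_tree_restrict:
  assumes "v \<in> digit_tree D"
  shows "digit_tree (\<lambda>k. if k < length v then {v ! k} else D k) =
    {w \<in> digit_tree D. prefix v w \<or> prefix w v}" (is "digit_tree ?D = _")
proof (intro set_eqI iffI)
  fix w assume w: "w \<in> digit_tree ?D"
  have "w ! k = v ! k" if "k < min (length v) (length w)" for k
  proof -
    have "w ! k \<in> ?D k" using w that unfolding digit_tree_def by (simp del: min_less_iff_conj)
    then show ?thesis using that by simp
  qed
  then have "take (min (length v) (length w)) v = take (min (length v) (length w)) w"
    by (intro nth_equalityI) simp_all
  then have "prefix v w \<or> prefix w v" by (rule comparable_if_take_min_eq)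
  moreover have "w ! k \<in> D k" if "k < length w" for k
    using w assms that unfolding digit_tree_def by (cases "k < length v") auto
  ultimately show "w \<in> {w \<in> digit_tree D. prefix v w \<or> prefix w v}"
    unfolding digit_tree_def by blast
next
  fix w assume w: "w \<in> {w \<in> digit_tree D. prefix v w \<or> prefix w v}"
  have "w ! k \<in> ?D k" if "k < length w" for k
  proof (cases "k < length v")
    case True
    then have "w ! k = v ! k"
      using w that prefix_nth[of v w] prefix_nth[of w v] by auto
    then show ?thesis using True by simp
  qed (use w that in \<open>simp add: digit_tree_def\<close>)
  then show "w \<in> digit_tree ?D" unfolding digit_tree_def by blast
qed

text \<open>
  \<open>D k\<close> is the set of digits that may follow a node of length \<open>k\<close>. The stem has length
  \<open>enumerate A 0\<close>, and only below it may the single admitted digit be \<open>2\<close>.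
\<close>
definition T_pattern :: "(nat \<Rightarrow> nat set) \<Rightarrow> nat set \<Rightarrow> bool" where
  "T_pattern D A \<longleftrightarrow> infinite A \<and> (\<forall>k\<in>A. D k = {0, 1, 2}) \<and>
     (\<forall>k. k \<notin> A \<longrightarrow> (\<exists>x<3. D k = {x})) \<and>
     (\<forall>k. k \<notin> A \<longrightarrow> enumerate A 0 \<le> k \<longrightarrow> 2 \<notin> D k)"

lemma T_pattern_infinite: "T_pattern D A \<Longrightarrow> infinite A"
  by (simp add: T_pattern_def)

lemma T_pattern_splitting_level: "T_pattern D A \<Longrightarrow> k \<in> A \<Longrightarrow> D k = {0, 1, 2}"
  by (simp add: T_pattern_def)

lemma T_pattern_nonsplitting_level: "T_pattern D A \<Longrightarrow> k \<notin> A \<Longrightarrow> \<exists>x<3. D k = {x}"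
  by (simp add: T_pattern_def)

lemma T_pattern_no_2_above_stem:
  "T_pattern D A \<Longrightarrow> k \<notin> A \<Longrightarrow> enumerate A 0 \<le> k \<Longrightarrow> 2 \<notin> D k"
  by (simp add: T_pattern_def)

lemma T_pattern_digit_less_3: "T_pattern D A \<Longrightarrow> x \<in> D k \<Longrightarrow> x < 3"
  using T_pattern_splitting_level T_pattern_nonsplitting_level by (cases "k \<in> A") fastforce+

lemma T_pattern_digits_nonempty: "T_pattern D A \<Longrightarrow> D k \<noteq> {}"
  using T_pattern_splitting_level T_pattern_nonsplitting_level by (cases "k \<in> A") fastforce+

lemma splitting_digit_tree:
  assumes "T_pattern D A"
  shows "splitting (digit_tree D) t \<longleftrightarrow> t \<in> digit_tree D \<and> length t \<in> A"
proof (cases "length t \<in> A")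
  case True
  then show ?thesis
    using T_pattern_splitting_level[OF assms] by (auto simp: splitting_def)
next
  case False
  then obtain x where "D (length t) = {x}"
    using T_pattern_nonsplitting_level[OF assms] by blast
  then show ?thesis using False by (auto simp: splitting_def)
qed

lemma stem_digit_tree:
  assumes D: "T_pattern D A" and s: "s \<in> digit_tree D" "length s = enumerate A 0"
  shows "stem (digit_tree D) = s"
proof (rule stem_eq_first_splitting)
  show "u \<in> digit_tree D" if "t \<in> digit_tree D" "prefix u t" for t u
    using digit_tree_prefix that by blast
  have "enumerate A 0 \<in> A"
    using enumerate_in_set T_pattern_infinite[OF D] by blast
  then show "s \<in> digit_tree D" "splitting (digit_tree D) s"
    using s splitting_digit_tree[OF D] by simp_all
  show "\<not> splitting (digit_tree D) t" if "length t < length s" for t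
    using that s(2) splitting_digit_tree[OF D] not_less_Least by (auto simp: enumerate_0)
qed

lemma is_tree_digit_tree:
  assumes D: "T_pattern D A"
  shows "is_tree (digit_tree D)"
  unfolding is_tree_def
proof (intro conjI ballI allI impI subsetI)
  show "digit_tree D \<noteq> {}" using digit_tree_Nil by blast
  fix t x assume "t \<in> digit_tree D" "x \<in> set t"
  then obtain k where "k < length t" "t ! k = x" "t ! k \<in> D k"
    unfolding digit_tree_def by (auto simp: in_set_conv_nth)
  then have "x < 3" using T_pattern_digit_less_3[OF D] by blast
  then show "x \<in> {0, 1, 2}" by auto
qed (blast intro: digit_tree_prefix)

lemma T_pattern_T_cond:
  assumes D: "T_pattern D A"
  shows "T_cond (digit_tree D) A"
proof -
  let ?p = "digit_tree D"
  show ?thesis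
    unfolding T_cond_def
  proof (intro conjI ballI allI impI)
    have "\<exists>t'. prefix t t' \<and> splitting ?p t'" if t: "t \<in> ?p" for t
    proof -
      obtain m where "m \<in> A" "length t \<le> m"
        using T_pattern_infinite[OF D] infinite_nat_iff_unbounded_le by blast
      moreover obtain t' where "prefix t t'" "length t' = m" "t' \<in> ?p"
        by (rule digit_tree_extend[OF T_pattern_digits_nonempty[OF D] t \<open>length t \<le> m\<close>])
      ultimately show ?thesis using splitting_digit_tree[OF D] by blast
    qed
    then show "perfect_tree ?p" using is_tree_digit_tree[OF D] by (simp add: perfect_tree_def)
  next
    fix t assume "t \<in> ?p"
    then show "length t \<in> A \<longleftrightarrow> splitting ?p t" using splitting_digit_tree[OF D] by blast
  next
    fix t :: "nat list" and i :: nat assume "splitting ?p t" "i < 3"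
    then show "t @ [i] \<in> ?p"
      using splitting_digit_tree[OF D] T_pattern_splitting_level[OF D] by auto
  next
    fix t assume t: "t \<in> ?p" "prefix (stem ?p) t" "\<not> splitting ?p t"
    obtain s where s: "length s = enumerate A 0" "s \<in> ?p"
      by (rule digit_tree_extend[OF T_pattern_digits_nonempty[OF D] digit_tree_Nil]) simp_all
    have "prefix s t" using t(2) stem_digit_tree[OF D s(2,1)] by simp
    then have "\<not> length t < enumerate A 0" using s(1) prefix_length_le by (metis not_le)
    moreover have "length t \<notin> A" using t splitting_digit_tree[OF D] by blast
    ultimately show "t @ [2] \<notin> ?p" using T_pattern_no_2_above_stem[OF D] by simp
  next
    fix s t :: "nat list" and i :: nat assume "s \<in> ?p" "t \<in> ?p" "length s = length t"
    then show "s @ [i] \<in> ?p \<longleftrightarrow> t @ [i] \<in> ?p" by simp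
  qed
qed

lemma T_cond_is_tree: "T_cond p A \<Longrightarrow> is_tree p"
  by (simp add: T_cond_def perfect_tree_def)

lemma T_cond_prefix_closed: "T_cond p A \<Longrightarrow> t \<in> p \<Longrightarrow> prefix u t \<Longrightarrow> u \<in> p"
  using T_cond_is_tree unfolding is_tree_def by blast

lemma T_cond_digit_less_3: "T_cond p A \<Longrightarrow> t @ [x] \<in> p \<Longrightarrow> x < 3"
  using T_cond_is_tree unfolding is_tree_def by fastforce

lemma T_cond_extends_to_splitting:
  "T_cond p A \<Longrightarrow> t \<in> p \<Longrightarrow> \<exists>t'. prefix t t' \<and> splitting p t'"
  by (simp add: T_cond_def perfect_tree_def)

lemma T_cond_splitting_iff: "T_cond p A \<Longrightarrow> t \<in> p \<Longrightarrow> splitting p t \<longleftrightarrow> length t \<in> A"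
  unfolding T_cond_def by (elim conjE) blast

lemma T_cond_splitting_child: "T_cond p A \<Longrightarrow> splitting p t \<Longrightarrow> x < 3 \<Longrightarrow> t @ [x] \<in> p"
  unfolding T_cond_def by (elim conjE) blast

lemma T_cond_no_2_above_stem:
  "T_cond p A \<Longrightarrow> t \<in> p \<Longrightarrow> prefix (stem p) t \<Longrightarrow> \<not> splitting p t \<Longrightarrow> t @ [2] \<notin> p"
  unfolding T_cond_def by (elim conjE) blast

lemma T_cond_uniform:
  assumes "T_cond p A" "s \<in> p" "t \<in> p" "\<not> splitting p s" "\<not> splitting p t"
    "length s = length t" "x < 2" "s @ [x] \<in> p"
  shows "t @ [x] \<in> p"
  using assms unfolding T_cond_def by (elim conjE) blast

lemma T_cond_child:
  assumes T: "T_cond p A" and t: "t \<in> p"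
  obtains x where "t @ [x] \<in> p"
proof -
  obtain t' where t': "prefix t t'" "splitting p t'"
    using T_cond_extends_to_splitting[OF T t] by blast
  show ?thesis
  proof (cases "length t < length t'")
    case True
    then have "prefix (t @ [t' ! length t]) t'" using t'(1) append_one_prefix by blast
    then show ?thesis using t'(2) T_cond_prefix_closed[OF T] that unfolding splitting_def by blast
  next
    case False
    then have "prefix t' t" using t'(1) prefix_length_prefix[of t' t' t] by simp
    then have "t' = t" using t'(1) prefix_order.antisym by blast
    then show ?thesis using t' that unfolding splitting_def by blast
  qed
qed

lemma T_cond_level_nonempty:
  assumes T: "T_cond p A"
  obtains t where "t \<in> p" "length t = k"
proof -
  have "\<exists>t\<in>p. length t = k"
  proof (induction k)
    case 0
    obtain t where "t \<in> p" using T_cond_is_tree[OF T] unfolding is_tree_def by blast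
    then have "[] \<in> p" using T_cond_prefix_closed[OF T] Nil_prefix by blast
    then show ?case by simp
  next
    case (Suc k)
    then obtain t where "t \<in> p" "length t = k" by blast
    moreover obtain x where "t @ [x] \<in> p" using T_cond_child[OF T \<open>t \<in> p\<close>] .
    ultimately show ?case by (metis length_append_singleton)
  qed
  then show ?thesis using that by blast
qed

lemma T_cond_infinite:
  assumes T: "T_cond p A"
  shows "infinite A"
  unfolding infinite_nat_iff_unbounded_le
proof
  fix k
  obtain t where t: "t \<in> p" "length t = k" by (rule T_cond_level_nonempty[OF T])
  then obtain t' where "prefix t t'" "splitting p t'"
    using T_cond_extends_to_splitting[OF T] by blast
  moreover from this have "t' \<in> p" by (simp add: splitting_def)
  ultimately show "\<exists>m\<ge>k. m \<in> A"
    using t prefix_length_le T_cond_splitting_iff[OF T] by blast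
qed

lemma T_cond_not_splitting_below:
  assumes "T_cond p A" "t \<in> p" "length t < enumerate A 0"
  shows "\<not> splitting p t"
proof -
  have "length t \<notin> A" using assms(3) not_less_Least by (auto simp: enumerate_0)
  then show ?thesis using T_cond_splitting_iff[OF assms(1,2)] by simp
qed

lemma T_cond_stem:
  assumes T: "T_cond p A" and s: "s \<in> p" "length s = enumerate A 0"
  shows "stem p = s"
proof (rule stem_eq_first_splitting)
  have "enumerate A 0 \<in> A" using enumerate_in_set T_cond_infinite[OF T] by blast
  then show "splitting p s" using s T_cond_splitting_iff[OF T] by simp
qed (use s T_cond_prefix_closed[OF T] T_cond_not_splitting_below[OF T] in auto)

lemma T_cond_comparable_stem:
  assumes T: "T_cond p A" and s: "s \<in> p" "length s = enumerate A 0" and t: "t \<in> p"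
  shows "prefix s t \<or> prefix t s"
  by (rule comparable_if_no_split_below[OF _ s(1) _ t])
    (use s T_cond_prefix_closed[OF T] T_cond_not_splitting_below[OF T] in auto)

lemma T_cond_homogeneous:
  assumes T: "T_cond p A" and t: "t \<in> p" "t' \<in> p" "length t = length t'" "t' @ [x] \<in> p"
  shows "t @ [x] \<in> p"
proof -
  obtain s where s: "s \<in> p" "length s = enumerate A 0" by (rule T_cond_level_nonempty[OF T])
  consider "length t \<in> A" | "length t < enumerate A 0"
    | "length t \<notin> A" "enumerate A 0 \<le> length t"
    by linarith
  then show ?thesis
  proof cases
    case 1
    then show ?thesis
      using t T_cond_splitting_iff[OF T] T_cond_splitting_child[OF T] T_cond_digit_less_3[OF T]
      by blast
  next
    case 2
    have "prefix t s"
      by (rule prefix_if_comparable_shorter) (use 2 s T_cond_comparable_stem[OF T s t(1)] in auto)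
    moreover have "prefix t' s"
      by (rule prefix_if_comparable_shorter)
        (use 2 t(3) s T_cond_comparable_stem[OF T s t(2)] in auto)
    ultimately have "prefix t t'" "prefix t' t"
      using t(3) prefix_length_prefix[of t s t'] prefix_length_prefix[of t' s t] by simp_all
    then show ?thesis using t(4) prefix_order.antisym by blast
  next
    case 3
    then have split: "\<not> splitting p t" "\<not> splitting p t'"
      using t T_cond_splitting_iff[OF T] by auto
    have "prefix s t'"
      by (rule prefix_if_comparable_shorter)
        (use 3 t(3) s T_cond_comparable_stem[OF T s t(2)] in auto)
    then have "x \<noteq> 2"
      using t split T_cond_stem[OF T s] T_cond_no_2_above_stem[OF T] by blast
    then have "x < 2" using T_cond_digit_less_3[OF T t(4)] by simp
    then show ?thesis using T_cond_uniform[OF T t(2,1) split(2,1)] t by simp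
  qed
qed

definition level_digits :: "nat list set \<Rightarrow> nat \<Rightarrow> nat set" where
  "level_digits p k = {x. \<exists>t\<in>p. length t = k \<and> t @ [x] \<in> p}"

lemma T_cond_level_digits:
  assumes "T_cond p A" "t \<in> p"
  shows "level_digits p (length t) = {x. t @ [x] \<in> p}"
  using assms T_cond_homogeneous[OF assms] unfolding level_digits_def by auto

lemma T_cond_eq_digit_tree:
  assumes T: "T_cond p A"
  shows "p = digit_tree (level_digits p)"
proof (intro set_eqI iffI)
  fix w assume w: "w \<in> p"
  have "w ! k \<in> level_digits p k" if "k < length w" for k
  proof -
    have "take k w @ [w ! k] \<in> p"
      using that w T_cond_prefix_closed[OF T] take_is_prefix by (metis take_Suc_conv_app_nth)
    moreover have "take k w \<in> p" using w T_cond_prefix_closed[OF T] take_is_prefix by blast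
    ultimately show ?thesis
      unfolding level_digits_def using that by (intro CollectI bexI[of _ "take k w"]) auto
  qed
  then show "w \<in> digit_tree (level_digits p)" by (simp add: digit_tree_def)
next
  fix w assume "w \<in> digit_tree (level_digits p)"
  then show "w \<in> p"
  proof (induction w rule: rev_induct)
    case Nil
    obtain t where "t \<in> p" by (rule T_cond_level_nonempty[OF T])
    then show ?case using T_cond_prefix_closed[OF T] Nil_prefix by blast
  next
    case (snoc x w)
    then have "w \<in> p" "x \<in> level_digits p (length w)" by simp_all
    then show ?case using T_cond_level_digits[OF T] by blast
  qed
qed

lemma T_cond_T_pattern:
  assumes T: "T_cond p A"
  shows "T_pattern (level_digits p) A"
proof -
  have node: "\<exists>t\<in>p. length t = k \<and> level_digits p k = {x. t @ [x] \<in> p}" for k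
    using T_cond_level_nonempty[OF T] T_cond_level_digits[OF T] by metis
  have "level_digits p k = {0, 1, 2}" if "k \<in> A" for k
  proof -
    obtain t where t: "t \<in> p" "length t = k" "level_digits p k = {x. t @ [x] \<in> p}"
      using node by blast
    then have "splitting p t" using that T_cond_splitting_iff[OF T] by blast
    then have "level_digits p k = {..<3}"
      unfolding t(3) using T_cond_splitting_child[OF T] T_cond_digit_less_3[OF T] by auto
    also have "{..<3} = {0, 1, 2 :: nat}" by auto
    finally show ?thesis .
  qed
  moreover have "\<exists>x<3. level_digits p k = {x}" if "k \<notin> A" for k
  proof -
    obtain t where t: "t \<in> p" "length t = k" "level_digits p k = {x. t @ [x] \<in> p}"
      using node by blast
    then have "\<not> splitting p t" using that T_cond_splitting_iff[OF T] by blast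
    moreover obtain x where x: "t @ [x] \<in> p" by (rule T_cond_child[OF T t(1)])
    ultimately have "level_digits p k = {x}" unfolding t(3) using t(1) by (auto simp: splitting_def)
    then show ?thesis using T_cond_digit_less_3[OF T x] by blast
  qed
  moreover have "2 \<notin> level_digits p k" if "k \<notin> A" "enumerate A 0 \<le> k" for k
  proof -
    obtain t where t: "t \<in> p" "length t = k" "level_digits p k = {x. t @ [x] \<in> p}"
      using node by blast
    obtain s where s: "s \<in> p" "length s = enumerate A 0" by (rule T_cond_level_nonempty[OF T])
    have "prefix s t"
      by (intro prefix_if_comparable_shorter)
        (use that t s T_cond_comparable_stem[OF T s t(1)] in auto)
    moreover have "\<not> splitting p t" using that t T_cond_splitting_iff[OF T] by blast
    ultimately show ?thesis
      unfolding t(3) using t(1) T_cond_stem[OF T s] T_cond_no_2_above_stem[OF T] by simp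
  qed
  ultimately show ?thesis unfolding T_pattern_def using T_cond_infinite[OF T] by blast
qed

lemma TT_iff: "(p, A) \<in> TT \<longleftrightarrow> (\<exists>D. T_pattern D A \<and> p = digit_tree D)"
  unfolding TT_def using T_pattern_T_cond T_cond_T_pattern T_cond_eq_digit_tree by blast

lemma TT_digit_tree:
  assumes "c \<in> TT"
  obtains D where "T_pattern D (snd c)" "fst c = digit_tree D"
  using assms TT_iff[of "fst c" "snd c"] by auto

lemma digit_tree_in_TT: "T_pattern D A \<Longrightarrow> (digit_tree D, A) \<in> TT"
  using TT_iff by blast

lemma TT_infinite: "c \<in> TT \<Longrightarrow> infinite (snd c)"
  by (metis TT_digit_tree T_pattern_infinite)

lemma TT_T_cond: "c \<in> TT \<Longrightarrow> T_cond (fst c) (snd c)"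
  by (simp add: TT_def case_prod_beta)

lemma TT_prefix_closed: "c \<in> TT \<Longrightarrow> w \<in> fst c \<Longrightarrow> prefix u w \<Longrightarrow> u \<in> fst c"
  using TT_T_cond T_cond_prefix_closed by blast

lemma TT_len_mono: "TT_len m q p \<Longrightarrow> i \<le> m \<Longrightarrow> TT_len i q p"
  unfolding TT_len_def by auto

lemma TT_len_trans: "TT_len n r q \<Longrightarrow> TT_len n q p \<Longrightarrow> TT_len n r p"
  unfolding TT_len_def TT_le_def by auto

section \<open>Fusion\<close>

lemma T_pattern_level_eq:
  assumes "T_pattern D A" "T_pattern D' A'" "D' k \<subseteq> D k" "k \<in> A' \<longleftrightarrow> k \<in> A"
  shows "D' k = D k"
proof (cases "k \<in> A")
  case True
  then show ?thesis using assms T_pattern_splitting_level by metis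
next
  case False
  then obtain x x' where "D k = {x}" "D' k = {x'}"
    using assms T_pattern_nonsplitting_level by meson
  then show ?thesis using assms(3) by auto
qed

lemma enumerate_fusion:
  fixes B :: "nat \<Rightarrow> nat set"
  assumes inf: "\<And>n. infinite (B n)"
    and agree: "\<And>n i. i \<le> n \<Longrightarrow> enumerate (B (Suc n)) i = enumerate (B n) i"
  shows "\<exists>A. infinite A \<and> (\<forall>n i. i \<le> n \<longrightarrow> enumerate A i = enumerate (B n) i) \<and>
    (\<forall>n k. k \<le> n \<longrightarrow> k \<in> A \<longleftrightarrow> k \<in> B n)"
proof -
  define c where "c i = enumerate (B i) i" for i
  have enum: "enumerate (B n) i = c i" if "i \<le> n" for n i
    using that
  proof (induction n rule: dec_induct)
    case (step n)
    then show ?case using agree by simp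
  qed (simp add: c_def)
  have "strict_mono c"
    unfolding strict_mono_Suc_iff
  proof
    fix i
    have "c i = enumerate (B (Suc i)) i" using enum by simp
    also have "\<dots> < enumerate (B (Suc i)) (Suc i)" using enumerate_step inf by blast
    finally show "c i < c (Suc i)" by (simp add: c_def)
  qed
  then have inf_c: "infinite (range c)" and enum_c: "enumerate (range c) = c"
    using strict_mono_imp_inj_on range_inj_infinite enumerate_range_strict_mono by blast+
  have "k \<in> range c \<longleftrightarrow> k \<in> B n" if "k \<le> n" for n k
  proof (rule enumerate_agree_imp_mem_iff[OF inf_c inf])
    show "\<forall>j\<le>n. enumerate (range c) j = enumerate (B n) j" using enum enum_c by simp
    show "k \<le> enumerate (range c) n" using that le_enumerate[OF inf_c, of n] by simp
  qed
  then show ?thesis using inf_c enum enum_c by (intro exI[of _ "range c"]) auto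
qed

lemma T_pattern_diagonal:
  assumes D: "\<And>n. T_pattern (D n) (B n)" and A: "infinite A"
    and min: "\<And>n. enumerate (B n) 0 = enumerate A 0" and mem: "\<And>k. k \<in> A \<longleftrightarrow> k \<in> B k"
  shows "T_pattern (\<lambda>k. D k k) A"
  unfolding T_pattern_def
proof (intro conjI ballI allI impI A)
  fix k
  show "D k k = {0, 1, 2}" if "k \<in> A" using that mem T_pattern_splitting_level[OF D] by simp
  show "\<exists>x<3. D k k = {x}" if "k \<notin> A"
    using that mem T_pattern_nonsplitting_level[OF D] by simp
  show "2 \<notin> D k k" if "k \<notin> A" "enumerate A 0 \<le> k"
    using that mem min T_pattern_no_2_above_stem[OF D] by simp
qed

lemma TT_fusion:
  assumes TT: "\<And>n. ps n \<in> TT" and chain: "\<And>n. TT_len n (ps (Suc n)) (ps n)"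
  shows "\<exists>q\<in>TT. \<forall>n. TT_len n q (ps n)"
proof -
  have "\<exists>D. T_pattern D (snd (ps n)) \<and> fst (ps n) = digit_tree D" for n
    by (rule TT_digit_tree[OF TT[of n]]) blast
  then obtain D where D: "\<And>n. T_pattern (D n) (snd (ps n))"
    and tree: "\<And>n. fst (ps n) = digit_tree (D n)" by metis
  have inf: "infinite (snd (ps n))" for n using TT TT_infinite by blast
  have agree: "enumerate (snd (ps (Suc n))) i = enumerate (snd (ps n)) i" if "i \<le> n" for n i
    using chain that unfolding TT_len_def by blast
  obtain A where A: "infinite A" "\<And>n i. i \<le> n \<Longrightarrow> enumerate A i = enumerate (snd (ps n)) i"
    and mem: "\<And>n k. k \<le> n \<Longrightarrow> k \<in> A \<longleftrightarrow> k \<in> snd (ps n)"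
    using enumerate_fusion[of "\<lambda>n. snd (ps n)", OF inf agree] by blast
  have "digit_tree (D (Suc n)) \<subseteq> digit_tree (D n)" for n
    using chain[of n] tree unfolding TT_len_def TT_le_def by simp
  then have "D (Suc n) k \<subseteq> D n k" for n k
    using digit_tree_subset_iff[of "D (Suc n)" "D n", OF T_pattern_digits_nonempty[OF D]]
    by blast
  then have dec: "D m k \<subseteq> D n k" if "n \<le> m" for n m k
    by (rule lift_Suc_antimono_le[of "\<lambda>n. D n k", OF _ that])
  define E where "E k = D k k" for k
  have stable: "D n k = E k" if "k \<le> n" for n k
    unfolding E_def
    by (rule T_pattern_level_eq[OF D[of k] D[of n]]) (use dec that mem[of k n] mem[of k k] in auto)
  have E_le: "E k \<subseteq> D n k" for n k
  proof (cases "k \<le> n")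
    case True
    then show ?thesis using stable by simp
  next
    case False
    then show ?thesis using dec[of n k k] by (simp add: E_def)
  qed
  have min: "enumerate (snd (ps n)) 0 = enumerate A 0" for n using A(2)[of 0 n] by simp
  have "T_pattern E A"
    unfolding E_def by (rule T_pattern_diagonal[OF D A(1) min]) (use mem in simp)
  moreover have "TT_len n (digit_tree E, A) (ps n)" for n
    using E_le A tree digit_tree_mono by (simp add: TT_len_def TT_le_def)
  ultimately show ?thesis using digit_tree_in_TT by blast
qed

section \<open>Countable antichains below fusions\<close>

lemma infinite_at_least: "infinite (A :: nat set) \<Longrightarrow> infinite {k \<in> A. L \<le> k}"
proof -
  assume "infinite A"
  moreover have "{k \<in> A. L \<le> k} = A - {..<L}" by auto
  ultimately show ?thesis by (simp add: Diff_infinite_finite)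
qed

lemma T_pattern_restrict:
  assumes D: "T_pattern D A" and v: "v \<in> digit_tree D"
  shows "T_pattern (\<lambda>k. if k < length v then {v ! k} else D k) {k \<in> A. length v \<le> k}"
    (is "T_pattern ?D ?A")
proof -
  have inf: "infinite ?A" using infinite_at_least T_pattern_infinite[OF D] by blast
  have "enumerate ?A 0 \<in> ?A" using enumerate_in_set[OF inf] .
  then have min: "length v \<le> enumerate ?A 0" "enumerate A 0 \<le> enumerate ?A 0"
    by (auto simp: enumerate_0 Least_le)
  show ?thesis
    unfolding T_pattern_def
  proof (intro conjI ballI allI impI inf)
    fix k
    show "?D k = {0, 1, 2}" if "k \<in> ?A" using that T_pattern_splitting_level[OF D] by simp
    show "\<exists>x<3. ?D k = {x}" if "k \<notin> ?A"
    proof (cases "k < length v")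
      case True
      then have "v ! k < 3" using v T_pattern_digit_less_3[OF D] by (auto simp: digit_tree_def)
      then show ?thesis using True by auto
    qed (use that T_pattern_nonsplitting_level[OF D] in simp)
    show "2 \<notin> ?D k" if "k \<notin> ?A" "enumerate ?A 0 \<le> k"
      using that min T_pattern_no_2_above_stem[OF D] by simp
  qed
qed

lemma T_pattern_paste:
  assumes D: "T_pattern D A" and D': "T_pattern D' A'"
    and L: "enumerate A 0 < L" "enumerate A' 0 < L"
  shows "T_pattern (\<lambda>k. if k < L then D k else D' k) ({k \<in> A. k < L} \<union> {k \<in> A'. L \<le> k})"
    (is "T_pattern ?D ?A")
proof -
  have "infinite {k \<in> A'. L \<le> k}" using infinite_at_least T_pattern_infinite[OF D'] by blast
  then have inf: "infinite ?A" by (simp add: infinite_Un)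
  have min: "enumerate ?A 0 = enumerate A 0"
    by (rule enumerate_eq_if_agree_below[OF T_pattern_infinite[OF D] inf]) (use L(1) in auto)
  show ?thesis
    unfolding T_pattern_def
  proof (intro conjI ballI allI impI inf)
    fix k
    show "?D k = {0, 1, 2}" if "k \<in> ?A"
      using that T_pattern_splitting_level[OF D] T_pattern_splitting_level[OF D'] by auto
    show "\<exists>x<3. ?D k = {x}" if "k \<notin> ?A"
      using that T_pattern_nonsplitting_level[OF D] T_pattern_nonsplitting_level[OF D']
      by (cases "k < L") simp_all
    show "2 \<notin> ?D k" if "k \<notin> ?A" "enumerate ?A 0 \<le> k"
      using that min L(2) T_pattern_no_2_above_stem[OF D] T_pattern_no_2_above_stem[OF D']
      by (cases "k < L") simp_all
  qed
qed

type_synonym T_condition = "nat list set \<times> nat set"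

definition cone_subset :: "nat list set \<Rightarrow> nat list \<Rightarrow> nat list set \<Rightarrow> bool" where
  "cone_subset p v a \<longleftrightarrow> v \<in> p \<and> (\<forall>w\<in>p. prefix v w \<longrightarrow> w \<in> a)"

lemma compatible_if_cone_subsets:
  assumes r: "r \<in> TT" and a: "a1 \<in> TT" "a2 \<in> TT"
    and cones: "cone_subset (fst r) v (fst a1)" "cone_subset (fst r) v (fst a2)"
  shows "compatible TT TT_le a1 a2"
proof -
  obtain D where D: "T_pattern D (snd r)" and tree: "fst r = digit_tree D"
    by (rule TT_digit_tree[OF r])
  have v: "v \<in> digit_tree D" using cones(1) tree by (simp add: cone_subset_def)
  let ?r' = "(digit_tree (\<lambda>k. if k < length v then {v ! k} else D k), {k \<in> snd r. length v \<le> k})"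
  have "?r' \<in> TT" using digit_tree_in_TT T_pattern_restrict[OF D v] by blast
  moreover have "TT_le ?r' a" if "a \<in> TT" "cone_subset (fst r) v (fst a)" for a
  proof -
    have "w \<in> fst a" if "w \<in> fst r" "prefix v w \<or> prefix w v" for w
      using that \<open>a \<in> TT\<close> \<open>cone_subset (fst r) v (fst a)\<close> TT_prefix_closed
      unfolding cone_subset_def by blast
    then show ?thesis using digit_tree_restrict[OF v] tree by (auto simp: TT_le_def)
  qed
  ultimately show ?thesis using a cones unfolding compatible_def by blast
qed

definition TT_le_below :: "nat \<Rightarrow> T_condition \<Rightarrow> T_condition \<Rightarrow> bool" where
  "TT_le_below L q p \<longleftrightarrow> q \<in> TT \<and> fst q \<subseteq> fst p \<and> snd q \<inter> {..<L} = snd p \<inter> {..<L}"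

lemma TT_le_below_TT: "TT_le_below L q p \<Longrightarrow> q \<in> TT"
  by (simp add: TT_le_below_def)

lemma TT_le_below_refl: "p \<in> TT \<Longrightarrow> TT_le_below L p p"
  by (simp add: TT_le_below_def)

lemma TT_le_below_trans: "TT_le_below L r q \<Longrightarrow> TT_le_below L q p \<Longrightarrow> TT_le_below L r p"
  unfolding TT_le_below_def by blast

lemma TT_le_below_enumerate:
  assumes p: "p \<in> TT" and q: "TT_le_below L q p" and lt: "enumerate (snd p) i < L"
  shows "enumerate (snd q) i = enumerate (snd p) i"
  using q TT_infinite[OF p] TT_infinite enumerate_eq_if_agree_below[OF _ _ _ lt]
  unfolding TT_le_below_def by metis

lemma TT_le_below_imp_TT_len:
  assumes p: "p \<in> TT" and q: "TT_le_below L q p" and lt: "enumerate (snd p) n < L"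
  shows "TT_len n q p"
proof -
  have "enumerate (snd q) i = enumerate (snd p) i" if "i \<le> n" for i
  proof (rule TT_le_below_enumerate[OF p q])
    have "enumerate (snd p) i \<le> enumerate (snd p) n" using that TT_infinite[OF p] by simp
    then show "enumerate (snd p) i < L" using lt by linarith
  qed
  then show ?thesis using q by (simp add: TT_len_def TT_le_def TT_le_below_def)
qed

lemma TT_graft:
  assumes p: "p \<in> TT" and r: "r \<in> TT" "fst r \<subseteq> fst p"
    and v: "v \<in> fst r" "length v = L"
    and L: "enumerate (snd p) 0 < L" "enumerate (snd r) 0 < L"
  shows "\<exists>q. TT_le_below L q p \<and> cone_subset (fst q) v (fst r)"
proof -
  obtain Dp where Dp: "T_pattern Dp (snd p)" and p_tree: "fst p = digit_tree Dp"
    by (rule TT_digit_tree[OF p])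
  obtain Dr where Dr: "T_pattern Dr (snd r)" and r_tree: "fst r = digit_tree Dr"
    by (rule TT_digit_tree[OF r(1)])
  have sub: "Dr k \<subseteq> Dp k" for k
    using r(2) p_tree r_tree digit_tree_subset_iff[OF T_pattern_digits_nonempty[OF Dr]] by simp
  define D where "D k = (if k < L then Dp k else Dr k)" for k
  define q where "q = (digit_tree D, {k \<in> snd p. k < L} \<union> {k \<in> snd r. L \<le> k})"
  have "q \<in> TT"
    unfolding q_def D_def by (rule digit_tree_in_TT[OF T_pattern_paste[OF Dp Dr L]])
  moreover have "fst q \<subseteq> fst p"
    unfolding q_def p_tree fst_conv using sub by (intro digit_tree_mono) (simp add: D_def)
  moreover have "snd q \<inter> {..<L} = snd p \<inter> {..<L}" by (auto simp: q_def)
  moreover have "v \<in> fst q"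
    using v sub r_tree unfolding q_def D_def digit_tree_def by auto
  moreover have "w \<in> fst r" if "w \<in> fst q" "prefix v w" for w
  proof -
    have "w ! k \<in> Dr k" if "k < length w" for k
    proof (cases "k < L")
      case True
      then have "w ! k = v ! k" using \<open>prefix v w\<close> v(2) prefix_nth by blast
      then show ?thesis using v r_tree True by (auto simp: digit_tree_def)
    next
      case False
      have "w ! k \<in> D k" using \<open>w \<in> fst q\<close> that unfolding q_def digit_tree_def by auto
      then show ?thesis using False by (simp add: D_def)
    qed
    then show ?thesis using r_tree by (simp add: digit_tree_def)
  qed
  ultimately show ?thesis unfolding TT_le_below_def cone_subset_def by blast
qed

definition cone_decided :: "T_condition set \<Rightarrow> nat \<Rightarrow> nat list \<Rightarrow> T_condition \<Rightarrow> T_condition \<Rightarrow> bool"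
  where "cone_decided AC L v p q \<longleftrightarrow> TT_le_below L q p \<and> (\<exists>a\<in>AC. cone_subset (fst q) v (fst a))"

definition prune :: "T_condition set \<Rightarrow> nat \<Rightarrow> nat list \<Rightarrow> T_condition \<Rightarrow> T_condition" where
  "prune AC L v p = (if \<exists>q. cone_decided AC L v p q then SOME q. cone_decided AC L v p q else p)"

lemma prune_decides: "\<exists>q. cone_decided AC L v p q \<Longrightarrow> cone_decided AC L v p (prune AC L v p)"
  unfolding prune_def by (simp add: someI_ex)

lemma prune_le_below:
  assumes "p \<in> TT"
  shows "TT_le_below L (prune AC L v p) p"
proof (cases "\<exists>q. cone_decided AC L v p q")
  case True
  then show ?thesis using prune_decides cone_decided_def by blast
next
  case False
  then show ?thesis using assms by (simp add: prune_def TT_le_below_refl)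
qed

lemma fold_prune_le_below: "p \<in> TT \<Longrightarrow> TT_le_below L (fold (prune AC L) vs p) p"
proof (induction vs arbitrary: p)
  case Nil
  then show ?case by (simp add: TT_le_below_refl)
next
  case (Cons v vs)
  have "TT_le_below L (prune AC L v p) p" using prune_le_below Cons.prems .
  moreover from this have "prune AC L v p \<in> TT" by (rule TT_le_below_TT)
  ultimately show ?case using Cons.IH TT_le_below_trans by fastforce
qed

lemma fold_prune_passes:
  assumes "v \<in> set vs" "p \<in> TT"
  shows "\<exists>p'. TT_le_below L p' p \<and> fst (fold (prune AC L) vs p) \<subseteq> fst (prune AC L v p')"
  using assms
proof (induction vs arbitrary: p)
  case (Cons u vs)
  have step: "TT_le_below L (prune AC L u p) p" using prune_le_below Cons.prems(2) .
  then have step_TT: "prune AC L u p \<in> TT" by (rule TT_le_below_TT)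
  show ?case
  proof (cases "v = u")
    case True
    have "fst (fold (prune AC L) vs (prune AC L u p)) \<subseteq> fst (prune AC L u p)"
      using fold_prune_le_below[OF step_TT] by (simp add: TT_le_below_def)
    then show ?thesis using True Cons.prems(2) TT_le_below_refl by fastforce
  next
    case False
    then have "v \<in> set vs" using Cons.prems(1) by simp
    then obtain p' where "TT_le_below L p' (prune AC L u p)"
      "fst (fold (prune AC L) vs (prune AC L u p)) \<subseteq> fst (prune AC L v p')"
      using Cons.IH step_TT by blast
    then show ?thesis using step TT_le_below_trans by fastforce
  qed
qed simp

definition prune_all :: "T_condition set \<Rightarrow> nat \<Rightarrow> T_condition \<Rightarrow> T_condition" where
  "prune_all AC L p = fold (prune AC L) (List.n_lists L [0, 1, 2]) p"

lemma prune_all_le_below: "p \<in> TT \<Longrightarrow> TT_le_below L (prune_all AC L p) p"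
  unfolding prune_all_def by (rule fold_prune_le_below)

lemma prune_all_decides:
  assumes p: "p \<in> TT" and r: "r \<in> TT" "fst r \<subseteq> fst (prune_all AC L p)"
    and v: "v \<in> fst r" "length v = L"
    and L: "enumerate (snd p) 0 < L" "enumerate (snd r) 0 < L"
    and a: "a \<in> AC" "fst r \<subseteq> fst a"
  shows "\<exists>a'\<in>AC. \<forall>w\<in>fst (prune_all AC L p). prefix v w \<longrightarrow> w \<in> fst a'"
proof -
  have "set v \<subseteq> {0, 1, 2}"
    using v(1) T_cond_is_tree[OF TT_T_cond[OF r(1)]] unfolding is_tree_def by blast
  then have "v \<in> set (List.n_lists L [0, 1, 2])" using v(2) by (simp add: set_n_lists)
  then obtain p' where p': "TT_le_below L p' p"
    and sub: "fst (prune_all AC L p) \<subseteq> fst (prune AC L v p')"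
    using fold_prune_passes[OF _ p] unfolding prune_all_def by blast
  have "p' \<in> TT" using p' by (rule TT_le_below_TT)
  have "fst (prune AC L v p') \<subseteq> fst p'"
    using prune_le_below[OF \<open>p' \<in> TT\<close>] by (simp add: TT_le_below_def)
  then have "fst r \<subseteq> fst p'" using r(2) sub by blast
  moreover have "enumerate (snd p') 0 < L" using TT_le_below_enumerate[OF p p' L(1)] L(1) by simp
  ultimately obtain q where "TT_le_below L q p'" "cone_subset (fst q) v (fst r)"
    using TT_graft[OF \<open>p' \<in> TT\<close> r(1) _ v _ L(2)] by blast
  then have "cone_decided AC L v p' q" using a by (auto simp: cone_decided_def cone_subset_def)
  then have "cone_decided AC L v p' (prune AC L v p')" by (intro prune_decides exI)
  then have "\<exists>a'\<in>AC. cone_subset (fst (prune AC L v p')) v (fst a')"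
    by (simp add: cone_decided_def)
  then show ?thesis using sub unfolding cone_subset_def by blast
qed

text \<open>
  The step from stage \<open>j\<close> keeps the splitting levels below a bound beyond the \<open>(n + j)\<close>-th one,
  so the sequence is a fusion sequence that stays \<open>\<le>\<^sub>n\<close>-below \<open>p\<close>.
\<close>
primrec antichain_seq :: "T_condition set \<Rightarrow> nat \<Rightarrow> T_condition \<Rightarrow> nat \<Rightarrow> T_condition" where
  "antichain_seq AC n p 0 = p"
| "antichain_seq AC n p (Suc j) =
    prune_all AC (Suc (enumerate (snd (antichain_seq AC n p j)) (n + j))) (antichain_seq AC n p j)"

lemma antichain_seq_TT: "p \<in> TT \<Longrightarrow> antichain_seq AC n p j \<in> TT"
  by (induction j) (simp_all add: prune_all_le_below[THEN TT_le_below_TT])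

lemma antichain_seq_step:
  assumes "p \<in> TT"
  shows "TT_len (n + j) (antichain_seq AC n p (Suc j)) (antichain_seq AC n p j)"
proof -
  have "antichain_seq AC n p j \<in> TT" using antichain_seq_TT[OF assms] .
  from TT_le_below_imp_TT_len[OF this prune_all_le_below[OF this]] show ?thesis by simp
qed

lemma antichain_seq_le: "p \<in> TT \<Longrightarrow> TT_len n (antichain_seq AC n p j) p"
proof (induction j)
  case 0
  then show ?case by (simp add: TT_len_def TT_le_def)
next
  case (Suc j)
  have "TT_len n (antichain_seq AC n p (Suc j)) (antichain_seq AC n p j)"
    using antichain_seq_step[OF Suc.prems] TT_len_mono le_add1 by blast
  then show ?case using Suc TT_len_trans by blast
qed

lemma antichain_eq_if_compatible:
  "antichain P le A \<Longrightarrow> a \<in> A \<Longrightarrow> b \<in> A \<Longrightarrow> compatible P le a b \<Longrightarrow> a = b"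
  unfolding antichain_def by blast

lemma TT_level_nonempty:
  assumes "c \<in> TT"
  obtains w where "w \<in> fst c" "length w = k"
  using T_cond_level_nonempty[OF TT_T_cond[OF assms]] by blast

lemma antichain_seq_limit_decides:
  assumes ac: "antichain TT TT_le AC" and p: "p \<in> TT"
    and q: "\<And>j. TT_len j q (antichain_seq AC n p j)"
    and a: "a \<in> AC" "compatible TT TT_le q a"
  shows "\<exists>v. cone_subset (fst q) v (fst a)"
proof -
  obtain r where r: "r \<in> TT" "fst r \<subseteq> fst q" "fst r \<subseteq> fst a"
    using a(2) unfolding compatible_def TT_le_def by blast
  \<comment> \<open>starting at stage \<open>j\<close> makes \<open>L\<close> exceed the stem of \<open>r\<close>, as grafting requires\<close>
  define j where "j = enumerate (snd r) 0"
  define s where "s = antichain_seq AC n p j"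
  define L where "L = Suc (enumerate (snd s) (n + j))"
  have s: "s \<in> TT" using antichain_seq_TT[OF p] by (simp add: s_def)
  have "enumerate (snd s) 0 \<le> enumerate (snd s) (n + j)" "n + j \<le> enumerate (snd s) (n + j)"
    using TT_infinite[OF s] le_enumerate by simp_all
  then have L: "enumerate (snd s) 0 < L" "enumerate (snd r) 0 < L"
    by (simp_all add: L_def j_def)
  obtain v where v: "v \<in> fst r" "length v = L" by (rule TT_level_nonempty[OF r(1)])
  have q_sub: "fst q \<subseteq> fst (prune_all AC L s)"
    using q[of "Suc j"] by (simp add: TT_len_def TT_le_def s_def L_def)
  then obtain a' where a': "a' \<in> AC" and cone: "\<forall>w\<in>fst (prune_all AC L s). prefix v w \<longrightarrow> w \<in> fst a'"
    using prune_all_decides[OF s r(1) _ v L a(1) r(3)] r(2) by blast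
  have "a \<in> TT" "a' \<in> TT" using ac a(1) a' by (auto simp: antichain_def)
  have "compatible TT TT_le a a'"
    by (rule compatible_if_cone_subsets[OF r(1) \<open>a \<in> TT\<close> \<open>a' \<in> TT\<close>])
      (use v r cone q_sub in \<open>auto simp: cone_subset_def\<close>)
  then have "a' = a" using antichain_eq_if_compatible[OF ac a(1) a'] by simp
  then show ?thesis using cone q_sub v r(2) unfolding cone_subset_def by blast
qed

lemma TT_antichain_countable_compatible:
  assumes ac: "antichain TT TT_le AC" and p: "p \<in> TT"
  shows "\<exists>q\<in>TT. TT_len n q p \<and> countable {a \<in> AC. compatible TT TT_le q a}"
proof -
  let ?ps = "antichain_seq AC n p"
  have "TT_len j (?ps (Suc j)) (?ps j)" for j
    using antichain_seq_step[OF p] TT_len_mono le_add2 by blast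
  then have "\<exists>q\<in>TT. \<forall>j. TT_len j q (?ps j)" by (rule TT_fusion[OF antichain_seq_TT[OF p]])
  then obtain q where q: "q \<in> TT" "\<And>j. TT_len j q (?ps j)" by blast
  have "TT_len n q p" using q(2)[of n] antichain_seq_le[OF p] TT_len_trans by blast
  let ?S = "{a \<in> AC. compatible TT TT_le q a}"
  define f :: "T_condition \<Rightarrow> nat list" where "f a = (SOME v. cone_subset (fst q) v (fst a))" for a
  have f: "cone_subset (fst q) (f a) (fst a)" if "a \<in> ?S" for a
  proof -
    from that have "a \<in> AC" "compatible TT TT_le q a" by simp_all
    from someI_ex[OF antichain_seq_limit_decides[OF ac p q(2) this]] show ?thesis
      unfolding f_def .
  qed
  have "inj_on f ?S"
  proof (rule inj_onI)
    fix a b assume ab: "a \<in> ?S" "b \<in> ?S" "f a = f b"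
    have "a \<in> TT" "b \<in> TT" using ab ac by (auto simp: antichain_def)
    moreover have "cone_subset (fst q) (f a) (fst a)" "cone_subset (fst q) (f a) (fst b)"
      using f[OF ab(1)] f[OF ab(2)] ab(3) by simp_all
    ultimately have "compatible TT TT_le a b" by (intro compatible_if_cone_subsets[OF q(1)])
    then show "a = b" using antichain_eq_if_compatible[OF ac] ab by blast
  qed
  then have "countable ?S" by (rule countable_image_inj_on[rotated]) simp
  then show ?thesis using q(1) \<open>TT_len n q p\<close> by blast
qed

theorem mainTheorem2:
  shows "axiomA TT TT_le TT_len"
  unfolding axiomA_def
proof (intro conjI)
  show "\<forall>p\<in>TT. TT_le p p" "\<forall>p\<in>TT. \<forall>q\<in>TT. \<forall>r\<in>TT. TT_le r q \<longrightarrow> TT_le q p \<longrightarrow> TT_le r p"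
    unfolding TT_le_def by auto
  show "\<forall>n. \<forall>p\<in>TT. TT_len n p p" by (simp add: TT_len_def TT_le_def)
  show "\<forall>n. \<forall>p\<in>TT. \<forall>q\<in>TT. \<forall>r\<in>TT. TT_len n r q \<longrightarrow> TT_len n q p \<longrightarrow> TT_len n r p"
    using TT_len_trans by blast
  show "\<forall>p\<in>TT. \<forall>q\<in>TT. TT_len 0 q p \<longrightarrow> TT_le q p" by (simp add: TT_len_def)
  show "\<forall>n. \<forall>p\<in>TT. \<forall>q\<in>TT. TT_len (Suc n) q p \<longrightarrow> TT_len n q p"
    using TT_len_mono le_SucI by blast
  show "\<forall>ps. (\<forall>n. ps n \<in> TT) \<longrightarrow> (\<forall>n. TT_len n (ps (Suc n)) (ps n)) \<longrightarrow>
      (\<exists>q\<in>TT. \<forall>n. TT_len n q (ps n))"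
    using TT_fusion by blast
  show "\<forall>A. antichain TT TT_le A \<longrightarrow> (\<forall>p\<in>TT. \<forall>n. \<exists>q\<in>TT. TT_len n q p \<and>
      countable {a\<in>A. compatible TT TT_le q a})"
    using TT_antichain_countable_compatible by blast
qed

end
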